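(* Let $k\in\mathbb C\setminus\mathbb Q$, $n,m\in\mathbb Z_{>0}$, $p_0=n+k^{-1}m$. For bipartitions $\alpha,\tilde\alpha\in\mathcal P_{n,m}$, $\alpha$ is $\mathcal E$-equivalent to $\tilde\alpha$ if and only if $\omega(\alpha)$ is $\mathcal R$-equivalent to $\omega(\tilde\alpha)$. In other words, the involution $\omega$ of $\mathcal P_{n,m}$ transforms the equivalence relation $\mathcal E$ into $\mathcal R$.
   Context: Partitions are identified with Young diagrams, i.e. finite sets of boxes $(i,j)\in\mathbb Z_{>0}^2$ ($i$ = row, $j$ = column) closed under moving up or left; a bipartition is a pair $\alpha=(\lambda,\mu)$ of partitions, with inclusion and set operations componentwise. For a box $x=(i,j)$, $c(x,a)=(j-1)+k(i-1)+a$, and $b_r(\alpha,k,p_0)=\sum_{x\in\lambda}c(x,0)^{r-1}+(-1)^r\sum_{y\in\mu}c(y,1+k-kp_0)^{r-1}$ for $r\ge1$. Bipartitions $\alpha,\tilde\alpha$ are $\mathcal E$-equivalent if $b_r(\alpha,k,p_0)=b_r(\tilde\alpha,k,p_0)$ for all $r\ge1$. Let $\pi(n,m)=\{(i,j):1\le i\le n,1\le j\le m\}$, $\theta(i,j)=(n-i+1,m-j+1)$ on $\pi(n,m)$, and let $\mathcal P_{n,m}$ be the set of bipartitions $(\lambda,\mu)$ with $\lambda,\mu\subset\pi(n,m)$. The involution $\omega:\mathcal P_{n,m}\to\mathcal P_{n,m}$ is $\omega(\lambda,\mu)=(\lambda,\pi(n,m)\setminus\theta(\mu))$. Bipartitions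 $(\lambda,\mu)$ and $(\tilde\lambda,\tilde\mu)$ are $\mathcal R$-equivalent if $\lambda\cap\mu=\tilde\lambda\cap\tilde\mu$ and $\lambda\cup\mu=\tilde\lambda\cup\tilde\mu$. *)

theory Defs
  imports Complex_Main
begin

type_synonym box = "nat \<times> nat"
type_synonym bipartition = "box set \<times> box set"

definition is_partition :: "box set \<Rightarrow> bool" where
  "is_partition L \<longleftrightarrow> finite L \<and> (\<forall>(i,j)\<in>L. 1 \<le> i \<and> 1 \<le> j) \<and>
     (\<forall>i j i' j'. (i,j) \<in> L \<longrightarrow> 1 \<le> i' \<longrightarrow> i' \<le> i \<longrightarrow> 1 \<le> j' \<longrightarrow> j' \<le> j \<longrightarrow> (i',j') \<in> L)"

definition cbox :: "complex \<Rightarrow> box \<Rightarrow> complex \<Rightarrow> complex" where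
  "cbox k x a = (of_nat (snd x) - 1) + k * (of_nat (fst x) - 1) + a"

definition b_r :: "nat \<Rightarrow> bipartition \<Rightarrow> complex \<Rightarrow> complex \<Rightarrow> complex" where
  "b_r r \<alpha> k p0 =
     (\<Sum>x\<in>fst \<alpha>. cbox k x 0 ^ (r - 1))
     + (-1) ^ r * (\<Sum>y\<in>snd \<alpha>. cbox k y (1 + k - k * p0) ^ (r - 1))"

definition E_equiv :: "complex \<Rightarrow> complex \<Rightarrow> bipartition \<Rightarrow> bipartition \<Rightarrow> bool" where
  "E_equiv k p0 \<alpha> \<beta> \<longleftrightarrow> (\<forall>r\<ge>1. b_r r \<alpha> k p0 = b_r r \<beta> k p0)"

definition rect :: "nat \<Rightarrow> nat \<Rightarrow> box set" where
  "rect n m = {(i,j). 1 \<le> i \<and> i \<le> n \<and> 1 \<le> j \<and> j \<le> m}"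

definition theta :: "nat \<Rightarrow> nat \<Rightarrow> box \<Rightarrow> box" where
  "theta n m x = (n - fst x + 1, m - snd x + 1)"

definition P_nm :: "nat \<Rightarrow> nat \<Rightarrow> bipartition set" where
  "P_nm n m = {(L, M). is_partition L \<and> is_partition M \<and> L \<subseteq> rect n m \<and> M \<subseteq> rect n m}"

definition omega :: "nat \<Rightarrow> nat \<Rightarrow> bipartition \<Rightarrow> bipartition" where
  "omega n m \<alpha> = (fst \<alpha>, rect n m - theta n m ` snd \<alpha>)"

definition R_equiv :: "bipartition \<Rightarrow> bipartition \<Rightarrow> bool" where
  "R_equiv \<alpha> \<beta> \<longleftrightarrow> fst \<alpha> \<inter> snd \<alpha> = fst \<beta> \<inter> snd \<beta> \<and> fst \<alpha> \<union> snd \<alpha> = fst \<beta> \<union> snd \<beta>"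

end

theory Submission
  imports Defs
begin

text \<open>Since p0 = n + m/k, the shifted content of a box y of the rectangle is minus the content
of its rotation theta y, so the sign (-1)^r in b_r cancels and the mu-part of b_r(lambda, mu) is
minus the (r-1)-th power sum of contents over theta(mu). Writing theta(mu) as the rectangle minus
its complement shows that, up to a constant, b_r(alpha) is the (r-1)-th power sum of contents
over the multiset union of the two components of omega(alpha). For irrational k distinct boxes
have distinct contents, and power sums over distinct points determine multiplicities (a
Vandermonde argument). Finally, the multiplicity (0, 1 or 2) of a box in a pair of sets is known
exactly when one knows whether it lies in their intersection and in their union.\<close>

lemma power_sums_eq_zero_imp_coeffs_zero:
  fixes c :: "'a \<Rightarrow> 'b::idom"
  assumes "finite U" "inj_on c U" "\<And>r. (\<Sum>x\<in>U. h x * c x ^ r) = 0"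
  shows "\<forall>x\<in>U. h x = 0"
  using assms
proof (induction U arbitrary: h rule: finite_induct)
  case empty
  then show ?case by simp
next
  case (insert a S)
  define h' where "h' x = h x * (c x - c a)" for x
  have "(\<Sum>x\<in>insert a S. h' x * c x ^ r) = 0" for r
  proof -
    have "(\<Sum>x\<in>insert a S. h' x * c x ^ r)
        = (\<Sum>x\<in>insert a S. h x * c x ^ Suc r) - c a * (\<Sum>x\<in>insert a S. h x * c x ^ r)"
      by (simp add: h'_def sum_subtractf sum_distrib_left algebra_simps)
    then show ?thesis by (simp only: insert.prems(2) mult_zero_right diff_zero)
  qed
  then have "(\<Sum>x\<in>S. h' x * c x ^ r) = 0" for r
    using insert.hyps by (simp add: h'_def)
  with insert.IH insert.prems(1) have "\<forall>x\<in>S. h' x = 0" by auto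
  moreover have "\<forall>x\<in>S. c x \<noteq> c a"
    using insert.prems(1) insert.hyps by (auto simp: inj_on_def)
  ultimately have S0: "\<forall>x\<in>S. h x = 0" by (simp add: h'_def)
  have "(\<Sum>x\<in>insert a S. h x * c x ^ 0) = 0" using insert.prems(2) .
  with insert.hyps S0 have "h a = 0" by simp
  with S0 show ?case by simp
qed

lemma minus_one_power_Suc_mult_uminus_power:
  "(- 1) ^ Suc s * (- z) ^ s = - (z ^ s :: 'a::comm_ring_1)"
proof -
  have "(- 1) ^ Suc s * (- z) ^ s = - (((- 1) * (- z)) ^ s)"
    unfolding power_mult_distrib by simp
  then show ?thesis by simp
qed

lemma of_bool_sums_eq_iff:
  "(of_bool A + of_bool B :: 'a::semiring_char_0) = of_bool C + of_bool D \<longleftrightarrow>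
    (A \<and> B \<longleftrightarrow> C \<and> D) \<and> (A \<or> B \<longleftrightarrow> C \<or> D)"
  by (cases A; cases B; cases C; cases D) simp_all

lemma inj_cbox:
  assumes "k \<notin> \<rat>"
  shows "inj (\<lambda>x. cbox k x 0)"
proof (rule injI)
  fix x y :: box
  assume eq: "cbox k x 0 = cbox k y 0"
  obtain i j i' j' where x: "x = (i, j)" and y: "y = (i', j')" by fastforce
  have e: "of_nat j - of_nat j' = k * (of_nat i' - of_nat i)"
    using eq by (simp add: cbox_def x y algebra_simps)
  have "i = i'"
  proof (rule ccontr)
    assume "i \<noteq> i'"
    then have "k = (of_nat j - of_nat j') / (of_nat i' - of_nat i)"
      using e by (simp add: field_simps)
    also have "\<dots> \<in> \<rat>" by (intro Rats_divide Rats_diff Rats_of_nat)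
    finally show False using assms by simp
  qed
  with e show "x = y" by (simp add: x y)
qed

lemma finite_rect: "finite (rect n m)"
  by (rule finite_subset[of _ "{1..n} \<times> {1..m}"]) (auto simp: rect_def)

lemma inj_on_theta: "inj_on (theta n m) (rect n m)"
  by (auto simp: inj_on_def theta_def rect_def)

lemma theta_image_subset_rect: "A \<subseteq> rect n m \<Longrightarrow> theta n m ` A \<subseteq> rect n m"
  by (auto simp: theta_def rect_def)

lemma cbox_shift_eq_uminus_cbox_theta:
  assumes "y \<in> rect n m" "p0 = of_nat n + of_nat m / k" "k \<noteq> 0"
  shows "cbox k y (1 + k - k * p0) = - cbox k (theta n m y) 0"
proof -
  obtain i j where y: "y = (i, j)" by fastforce
  have "i \<le> n" "j \<le> m" using assms(1) by (auto simp: rect_def y)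
  then have "cbox k (theta n m y) 0 = (of_nat m - of_nat j) + k * (of_nat n - of_nat i)"
    by (simp add: cbox_def theta_def y of_nat_diff)
  moreover have "k * p0 = k * of_nat n + of_nat m" using assms(2,3) by (simp add: field_simps)
  ultimately show ?thesis by (simp add: cbox_def y algebra_simps)
qed

definition power_sum :: "complex \<Rightarrow> nat \<Rightarrow> bipartition \<Rightarrow> complex" where
  "power_sum k q \<alpha> = (\<Sum>x\<in>fst \<alpha>. cbox k x 0 ^ q) + (\<Sum>x\<in>snd \<alpha>. cbox k x 0 ^ q)"

lemma b_r_Suc_eq_power_sum_omega:
  assumes "snd \<alpha> \<subseteq> rect n m" "p0 = of_nat n + of_nat m / k" "k \<noteq> 0"
  shows "b_r (Suc s) \<alpha> k p0 = power_sum k s (omega n m \<alpha>) - (\<Sum>x\<in>rect n m. cbox k x 0 ^ s)"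
proof -
  obtain L M where \<alpha>: "\<alpha> = (L, M)" by fastforce
  have M: "M \<subseteq> rect n m" using assms(1) by (simp add: \<alpha>)
  let ?c = "\<lambda>x. cbox k x 0 ^ s"
  have "(-1) ^ Suc s * (\<Sum>y\<in>M. cbox k y (1 + k - k * p0) ^ s)
      = (\<Sum>y\<in>M. (-1) ^ Suc s * (- cbox k (theta n m y) 0) ^ s)"
    using cbox_shift_eq_uminus_cbox_theta[OF _ assms(2,3)] M
    by (auto simp: sum_distrib_left intro!: sum.cong)
  also have "\<dots> = - (\<Sum>y\<in>M. ?c (theta n m y))"
    by (simp only: minus_one_power_Suc_mult_uminus_power sum_negf)
  also have "(\<Sum>y\<in>M. ?c (theta n m y)) = (\<Sum>z\<in>theta n m ` M. ?c z)"
    by (simp add: sum.reindex inj_on_subset[OF inj_on_theta M])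
  also have "\<dots> = (\<Sum>z\<in>rect n m. ?c z) - (\<Sum>z\<in>rect n m - theta n m ` M. ?c z)"
    using sum.subset_diff[OF theta_image_subset_rect[OF M] finite_rect, of ?c] by simp
  finally have "(-1) ^ Suc s * (\<Sum>y\<in>M. cbox k y (1 + k - k * p0) ^ s)
      = (\<Sum>z\<in>rect n m - theta n m ` M. ?c z) - (\<Sum>z\<in>rect n m. ?c z)"
    by simp
  then show ?thesis
    unfolding b_r_def power_sum_def omega_def \<alpha> fst_conv snd_conv diff_Suc_1 by simp
qed

lemma omega_subset_rect:
  assumes "\<alpha> \<in> P_nm n m"
  shows "fst (omega n m \<alpha>) \<subseteq> rect n m" "snd (omega n m \<alpha>) \<subseteq> rect n m"
  using assms by (auto simp: P_nm_def omega_def)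

lemma E_equiv_iff_power_sums_omega:
  assumes "\<alpha> \<in> P_nm n m" "\<beta> \<in> P_nm n m" "p0 = of_nat n + of_nat m / k" "k \<noteq> 0"
  shows "E_equiv k p0 \<alpha> \<beta> \<longleftrightarrow>
    (\<forall>q. power_sum k q (omega n m \<alpha>) = power_sum k q (omega n m \<beta>))"
proof -
  have "snd \<alpha> \<subseteq> rect n m" "snd \<beta> \<subseteq> rect n m"
    using assms(1,2) by (auto simp: P_nm_def)
  have "E_equiv k p0 \<alpha> \<beta> \<longleftrightarrow> (\<forall>s. b_r (Suc s) \<alpha> k p0 = b_r (Suc s) \<beta> k p0)"
    unfolding E_equiv_def by (auto dest: Suc_le_D)
  also have "\<dots> \<longleftrightarrow> (\<forall>q. power_sum k q (omega n m \<alpha>) = power_sum k q (omega n m \<beta>))"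
    using b_r_Suc_eq_power_sum_omega assms(3,4) \<open>snd \<alpha> \<subseteq> rect n m\<close> \<open>snd \<beta> \<subseteq> rect n m\<close>
    by simp
  finally show ?thesis .
qed

lemma power_sum_eq_weighted_sum:
  assumes "finite U" "fst \<alpha> \<subseteq> U" "snd \<alpha> \<subseteq> U"
  shows "power_sum k q \<alpha>
    = (\<Sum>x\<in>U. (of_bool (x \<in> fst \<alpha>) + of_bool (x \<in> snd \<alpha>)) * cbox k x 0 ^ q)"
proof -
  have "(\<Sum>x\<in>U. of_bool (x \<in> A) * cbox k x 0 ^ q) = (\<Sum>x\<in>A. cbox k x 0 ^ q)"
    if "A \<subseteq> U" for A
    using that assms(1) by (simp add: sum.If_cases Int_absorb1)
  then show ?thesis
    using assms(2,3) by (simp add: power_sum_def distrib_right sum.distrib)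
qed

lemma power_sums_eq_iff_R_equiv:
  assumes "k \<notin> \<rat>" "finite U"
    and "fst \<alpha> \<subseteq> U" "snd \<alpha> \<subseteq> U" "fst \<beta> \<subseteq> U" "snd \<beta> \<subseteq> U"
  shows "(\<forall>q. power_sum k q \<alpha> = power_sum k q \<beta>) \<longleftrightarrow> R_equiv \<alpha> \<beta>"
proof -
  define mult where "mult \<gamma> x = (of_bool (x \<in> fst \<gamma>) + of_bool (x \<in> snd \<gamma>) :: complex)"
    for \<gamma> :: bipartition and x
  have ps: "power_sum k q \<alpha> - power_sum k q \<beta>
      = (\<Sum>x\<in>U. (mult \<alpha> x - mult \<beta> x) * cbox k x 0 ^ q)" for q
    using assms(2-6)
    by (simp add: power_sum_eq_weighted_sum mult_def sum_subtractf left_diff_distrib)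
  have "(\<forall>q. power_sum k q \<alpha> = power_sum k q \<beta>) \<longleftrightarrow> (\<forall>x\<in>U. mult \<alpha> x = mult \<beta> x)"
  proof
    assume "\<forall>q. power_sum k q \<alpha> = power_sum k q \<beta>"
    then have "(\<Sum>x\<in>U. (mult \<alpha> x - mult \<beta> x) * cbox k x 0 ^ q) = 0" for q
      by (simp flip: ps)
    from power_sums_eq_zero_imp_coeffs_zero[OF assms(2)
        inj_on_subset[OF inj_cbox[OF assms(1)] subset_UNIV] this]
    show "\<forall>x\<in>U. mult \<alpha> x = mult \<beta> x" by simp
  next
    assume "\<forall>x\<in>U. mult \<alpha> x = mult \<beta> x"
    then have "power_sum k q \<alpha> - power_sum k q \<beta> = 0" for q
      by (simp add: ps)
    then show "\<forall>q. power_sum k q \<alpha> = power_sum k q \<beta>" by simp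
  qed
  also have "\<dots> \<longleftrightarrow> R_equiv \<alpha> \<beta>"
    using assms(3-6) by (auto simp: mult_def of_bool_sums_eq_iff R_equiv_def)
  finally show ?thesis .
qed

theorem mainTheorem2:
  fixes k p0 :: complex and n m :: nat and \<alpha> \<beta> :: bipartition
  assumes "k \<notin> \<rat>" and "n > 0" and "m > 0"
    and "p0 = of_nat n + of_nat m / k"
    and "\<alpha> \<in> P_nm n m" and "\<beta> \<in> P_nm n m"
  shows "E_equiv k p0 \<alpha> \<beta> \<longleftrightarrow> R_equiv (omega n m \<alpha>) (omega n m \<beta>)"
proof -
  have "k \<noteq> 0" using assms(1) by auto
  then have "E_equiv k p0 \<alpha> \<beta> \<longleftrightarrow>
      (\<forall>q. power_sum k q (omega n m \<alpha>) = power_sum k q (omega n m \<beta>))"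
    using E_equiv_iff_power_sums_omega assms(4-6) by blast
  also have "\<dots> \<longleftrightarrow> R_equiv (omega n m \<alpha>) (omega n m \<beta>)"
    using power_sums_eq_iff_R_equiv[OF assms(1) finite_rect]
      omega_subset_rect[OF assms(5)] omega_subset_rect[OF assms(6)] by blast
  finally show ?thesis .
qed

end
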